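(* Let $n\ge 2$ be an integer and $g=3n+2$, and let $G=\{\ell_1<\dots<\ell_g\}$ be a pure $(2n+1)$-sparse gapset of genus $g$. Then there is a unique $\alpha\in[1,g-1]$ such that $\ell_{\alpha+1}-\ell_\alpha=2n+1$.
   Context: A gapset is a finite set $G\subset\mathbb{N}=\{1,2,\dots\}$ such that whenever $z\in G$ and $z=x+y$ with $x,y\in\mathbb{N}$, then $x\in G$ or $y\in G$; its genus is $g=\#G$. $G$ is pure $\kappa$-sparse if $\ell_{i+1}-\ell_i\le\kappa$ for all $i$ with equality for some $i$. *)

theory Defs
  imports Main
begin

definition gapset :: "nat set \<Rightarrow> bool" where
  "gapset G \<longleftrightarrow> finite G \<and> 0 \<notin> G \<and>
     (\<forall>z\<in>G. \<forall>x y. x \<ge> 1 \<and> y \<ge> 1 \<and> z = x + y \<longrightarrow> x \<in> G \<or> y \<in> G)"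

definition genus :: "nat set \<Rightarrow> nat" where
  "genus G = card G"

(* ell G i = i-th smallest element of G, 1-indexed: ell G 1 < ell G 2 < ... < ell G (card G) *)
definition ell :: "nat set \<Rightarrow> nat \<Rightarrow> nat" where
  "ell G i = sorted_list_of_set G ! (i - 1)"

definition pure_sparse :: "nat \<Rightarrow> nat set \<Rightarrow> bool" where
  "pure_sparse \<kappa> G \<longleftrightarrow>
     (\<forall>i. 1 \<le> i \<and> i < card G \<longrightarrow> ell G (i+1) - ell G i \<le> \<kappa>) \<and>
     (\<exists>i. 1 \<le> i \<and> i < card G \<and> ell G (i+1) - ell G i = \<kappa>)"

end

theory Submission
  imports Defs
begin

text \<open>Suppose the jump \<open>\<kappa>\<close> between consecutive elements occurs twice, after the
  \<open>\<alpha>\<close>-th and after the \<open>\<beta>\<close>-th element (\<open>\<alpha> < \<beta>\<close>), and let \<open>z = \<ell>(\<beta>+1)\<close>.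
  A gapset contains \<open>z - s\<close> for every non-element \<open>s < z\<close>, so reflecting through \<open>z\<close> the
  two runs of \<open>\<kappa> - 1\<close> non-elements following \<open>\<ell>(\<alpha>)\<close> and \<open>\<ell>(\<beta>)\<close> gives two disjoint
  runs of elements below \<open>z\<close>. Hence the genus is at least \<open>2\<kappa> - 1\<close>, which for
  \<open>\<kappa> = 2n + 1\<close> exceeds \<open>3n + 2\<close> as soon as \<open>n \<ge> 2\<close>.\<close>

lemma ell_less_ell_iff:
  assumes "finite G" "1 \<le> i" "i \<le> card G" "1 \<le> j" "j \<le> card G"
  shows "ell G i < ell G j \<longleftrightarrow> i < j"
proof -
  have "sorted_wrt (<) (sorted_list_of_set G)" by simp
  then have "strict_mono_on {..<card G} (\<lambda>k. sorted_list_of_set G ! k)"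
    by (auto simp: strict_mono_on_def sorted_wrt_iff_nth_less)
  then have "sorted_list_of_set G ! (i - 1) < sorted_list_of_set G ! (j - 1) \<longleftrightarrow> i - 1 < j - 1"
    using assms by (intro strict_mono_on_less) auto
  moreover have "i - 1 < j - 1 \<longleftrightarrow> i < j" using assms by arith
  ultimately show ?thesis by (simp add: ell_def)
qed

lemma ell_mem:
  assumes "finite G" "1 \<le> i" "i \<le> card G"
  shows "ell G i \<in> G"
proof -
  have "i - 1 < length (sorted_list_of_set G)" using assms by simp
  then show ?thesis using assms(1) unfolding ell_def by (metis nth_mem set_sorted_list_of_set)
qed

lemma mem_imp_ell:
  assumes "finite G" "x \<in> G"
  obtains j where "1 \<le> j" "j \<le> card G" "x = ell G j"
proof -
  obtain k where "k < card G" "x = sorted_list_of_set G ! k"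
    using assms by (metis in_set_conv_nth length_sorted_list_of_set set_sorted_list_of_set)
  then show ?thesis using that[of "k + 1"] by (simp add: ell_def)
qed

lemma not_mem_between_ell:
  assumes "finite G" "1 \<le> i" "i < card G" "ell G i < x" "x < ell G (i + 1)"
  shows "x \<notin> G"
proof
  assume "x \<in> G"
  with assms(1) obtain j where j: "1 \<le> j" "j \<le> card G" "x = ell G j"
    by (rule mem_imp_ell)
  then have "i < j" "j < i + 1"
    using assms ell_less_ell_iff[OF assms(1)] by simp_all
  then show False by simp
qed

lemma gapset_reflect_interval:
  assumes "gapset G" "z \<in> G" "{a<..<c} \<inter> G = {}" "c \<le> z"
  shows "{z - c<..<z - a} \<subseteq> G"
proof
  fix y assume "y \<in> {z - c<..<z - a}"
  then have y: "z - c < y" "y < z - a" by simp_all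
  define s where "s = z - y"
  have s: "s \<in> {a<..<c}" "1 \<le> y" using y assms(4) by (auto simp: s_def)
  then have "s \<notin> G" using assms(3) by blast
  moreover have "z = s + y" using y unfolding s_def by arith
  moreover have "1 \<le> s" using s by simp
  ultimately show "y \<in> G" using assms(1,2) s(2) unfolding gapset_def by blast
qed

lemma gapset_card_ge_of_repeated_jump:
  assumes G: "gapset G"
    and idx: "1 \<le> \<alpha>" "\<alpha> < \<beta>" "\<beta> < card G"
    and jump_\<alpha>: "ell G (\<alpha> + 1) - ell G \<alpha> = \<kappa>"
    and jump_\<beta>: "ell G (\<beta> + 1) - ell G \<beta> = \<kappa>"
  shows "2 * \<kappa> - 1 \<le> card G"
proof -
  have fin: "finite G" using G by (simp add: gapset_def)
  define a b z where "a = ell G \<alpha>" and "b = ell G \<beta>" and "z = ell G (\<beta> + 1)"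
  have z_eq: "z = b + \<kappa>"
    using jump_\<beta> ell_less_ell_iff[OF fin, of \<beta> "\<beta> + 1"] idx by (simp add: b_def z_def)
  have a_next: "ell G (\<alpha> + 1) = a + \<kappa>"
    using jump_\<alpha> ell_less_ell_iff[OF fin, of \<alpha> "\<alpha> + 1"] idx by (simp add: a_def)
  have "ell G (\<alpha> + 1) \<le> b"
    using ell_less_ell_iff[OF fin, of \<beta> "\<alpha> + 1"] idx by (simp add: b_def)
  then have ab: "a + \<kappa> \<le> b" using a_next by simp
  have zG: "z \<in> G" using ell_mem[OF fin] idx by (simp add: z_def)
  have "{a<..<a + \<kappa>} \<inter> G = {}" "{b<..<z} \<inter> G = {}"
    using not_mem_between_ell[OF fin, of \<alpha>] not_mem_between_ell[OF fin, of \<beta>] idx a_next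
    by (auto simp: a_def b_def z_def)
  then have runs: "{b - a<..<b - a + \<kappa>} \<subseteq> G" "{0<..<\<kappa>} \<subseteq> G"
    using gapset_reflect_interval[OF G zG, of a "a + \<kappa>"]
      gapset_reflect_interval[OF G zG, of b z] ab z_eq
    by (simp_all add: algebra_simps)
  define S where "S = insert z ({0<..<\<kappa>} \<union> {b - a<..<b - a + \<kappa>})"
  have "{0<..<\<kappa>} \<inter> {b - a<..<b - a + \<kappa>} = {}"
    and "z \<notin> {0<..<\<kappa>} \<union> {b - a<..<b - a + \<kappa>}"
    using ab z_eq by auto
  then have card_S: "card S = 2 * (\<kappa> - 1) + 1"
    by (simp add: S_def card_Un_disjoint)
  have "S \<subseteq> G" using runs zG by (simp add: S_def)
  then have "card S \<le> card G" using fin by (simp add: card_mono)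
  with card_S show ?thesis by simp
qed

theorem mainTheorem19:
  fixes n g :: nat and G :: "nat set"
  assumes "n \<ge> 2" and "g = 3*n + 2"
    and "gapset G" and "genus G = g" and "pure_sparse (2*n+1) G"
  shows "\<exists>!\<alpha>. 1 \<le> \<alpha> \<and> \<alpha> \<le> g - 1 \<and> ell G (\<alpha>+1) - ell G \<alpha> = 2*n+1"
proof -
  have card: "card G = g" using assms(4) by (simp add: genus_def)
  have no_two: False
    if "1 \<le> \<alpha>" "\<alpha> < \<beta>" "\<beta> \<le> g - 1"
      "ell G (\<alpha>+1) - ell G \<alpha> = 2*n+1" "ell G (\<beta>+1) - ell G \<beta> = 2*n+1" for \<alpha> \<beta>
  proof -
    have "\<beta> < card G" using that(3) card assms(2) by simp
    then have "2 * (2*n+1) - 1 \<le> g"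
      using gapset_card_ge_of_repeated_jump[OF assms(3) that(1,2) _ that(4,5)] card by simp
    then show False using assms(1,2) by simp
  qed
  obtain i where i: "1 \<le> i" "i < card G" "ell G (i+1) - ell G i = 2*n+1"
    using assms(5) unfolding pure_sparse_def by blast
  then have i_le: "i \<le> g - 1" using card by simp
  show ?thesis
  proof (rule ex1I)
    show "1 \<le> i \<and> i \<le> g - 1 \<and> ell G (i+1) - ell G i = 2*n+1" using i i_le by simp
  next
    fix j assume j: "1 \<le> j \<and> j \<le> g - 1 \<and> ell G (j+1) - ell G j = 2*n+1"
    show "j = i"
    proof (cases i j rule: linorder_cases)
      case equal then show ?thesis by simp
    next
      case less then show ?thesis using no_two[of i j] i j by blast
    next
      case greater then show ?thesis using no_two[of j i] i i_le j by blast
    qed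
  qed
qed

end
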